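(* Let $P_1$ be a $C_\pi$ process and suppose $P_1\xrightarrow{\alpha_1}P_2\xrightarrow{\alpha_2}\cdots\xrightarrow{\alpha_m}P_{m+1}$, where all bound outputs are chosen fresh. Suppose that for some $i\in\{1,\dots,m-1\}$ we have $\alpha_i=k(l)$ and $l\notin\mathrm{fo}(P_i)$. Then $\alpha_j\neq\overline{k'}\langle l\rangle$ for every channel $k'$ and every $j=i+1,\dots,m$.
   Context: The Confidential $\pi$-calculus $C_\pi$. There are two disjoint countable sets: ${\cal V}$ of variables (ranged over by $x,y,z,\dots$) and ${\cal C}$ of channels (ranged over by $k,l,m,n,\dots$). Let ${\cal N}={\cal V}\cup{\cal C}$, ranged over by $a,b,c,\dots$. Prefixes: $\pi ::= \overline{a}\langle k\rangle \mid a(x) \mid [a=b]\pi$. Processes: $P ::= 0 \mid \pi.P \mid P\,|\,P \mid (\nu k)P \mid\, !P$. The object of an output is always a channel, and the bound object of an input is always a variable. In $(\nu k)P$ the channel $k$ is bound, and in $a(x).P$ the variable $x$ is bound, with scope $P$. The sets $\mathrm{fn}(P)$, $\mathrm{bn}(P)$ and $\mathrm{n}(P)$ are the free, bound and all names of $P$. The set $\mathrm{fo}(P)$ consists of the free channels of $P$ that occur as objects of output prefixes in $P$. Processes are identified up to $\alpha$-conversion. Actions: $\alpha ::= \overline{k}\langle l\rangle \mid k(l) \mid (\nu l)\overline{k}\langle l\rangle \mid \tau$, where $k,l$ are channels. We have $\mathrm{fn}(\overline{k}\langle l\rangle)=\mathrm{fn}(k(l))=\{k,l\}$, $\mathrm{fn}((\nu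 l)\overline{k}\langle l\rangle)=\{k\}$, $\mathrm{bn}((\nu l)\overline{k}\langle l\rangle)=\{l\}$, all other bound-name sets are empty, $\mathrm{fn}(\tau)=\emptyset$, and $\mathrm{n}(\alpha)=\mathrm{fn}(\alpha)\cup\mathrm{bn}(\alpha)$. The labelled transition relation $\xrightarrow{\alpha}$ is the least relation closed under the following rules: - (out) $\overline{k}\langle l\rangle.P \xrightarrow{\overline{k}\langle l\rangle} P$. - (in) $k(x).P \xrightarrow{k(l)} P\{l/x\}$ for every channel $l$. - (match) If $\pi.P\xrightarrow{\alpha}P'$, then $[a=a]\pi.P\xrightarrow{\alpha}P'$. - (res) If $P\xrightarrow{\alpha}P'$ and $k\notin \mathrm{n}(\alpha)$, then $(\nu k)P\xrightarrow{\alpha}(\nu k)P'$. - (open) If $P\xrightarrow{\overline{k}\langle l\rangle}Q$ and $k\neq l$, then $(\nu l)P\xrightarrow{(\nu l)\overline{k}\langle l\rangle}Q$. - (par-l) If $P\xrightarrow{\alpha}Q$ and $\mathrm{bn}(\alpha)\cap\mathrm{fn}(R)=\emptyset$, then $P|R\xrightarrow{\alpha}Q|R$. - (comm-l) If $P\xrightarrow{\overline{k}\langle l\rangle}P'$ and $Q\xrightarrow{k(l)}Q'$, then $P|Q\xrightarrow{\tau}P'|Q'$. - (close-l) If $P\xrightarrow{(\nu l)\overline{k}\langle l\rangle}P'$, $Q\xrightarrow{k(l)}Q'$ and $l\notin\mathrm{fn}(Q)$, then $P|Q\xrightarrow{\tau}(\nu l)(P'|Q')$. - The symmetric rules (par-r),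 (comm-r), (close-r). - (rep-act) If $P\xrightarrow{\alpha}P'$, then $!P\xrightarrow{\alpha}P'|!P$. - (rep-comm) If $P\xrightarrow{\overline{k}\langle l\rangle}P'$ and $P\xrightarrow{k(l)}P''$, then $!P\xrightarrow{\tau}(P'|P'')|!P$. - (rep-close) If $P\xrightarrow{(\nu l)\overline{k}\langle l\rangle}P'$, $P\xrightarrow{k(l)}P''$ and $l\notin\mathrm{fn}(P)$, then $!P\xrightarrow{\tau}(\nu l)(P'|P'')|!P$. *)

theory Defs
  imports Main
begin

text \<open>Variables and channels are two disjoint countable sets, both represented by nat.\<close>
type_synonym var = nat
type_synonym chan = nat

datatype name = NV var | NC chan

text \<open>Prefixes: output a<k> (object always a channel), input a(x) (bound object always a
  variable), match [a=b]pi.\<close>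
datatype prefix = POut name chan | PIn name var | PMatch name name prefix

datatype proc = PNil | Pref prefix proc | Par proc proc | Res chan proc | Bang proc

text \<open>Actions: AOut k l = k<l>, AIn k l = k(l), ABOut k l = (nu l) k<l>, Tau.\<close>
datatype act = AOut chan chan | AIn chan chan | ABOut chan chan | Tau

fun pfn :: "prefix \<Rightarrow> name set" where
  "pfn (POut a k) = {a, NC k}"
| "pfn (PIn a x) = {a}"
| "pfn (PMatch a b p) = {a, b} \<union> pfn p"

fun pbv :: "prefix \<Rightarrow> var option" where
  "pbv (POut a k) = None"
| "pbv (PIn a x) = Some x"
| "pbv (PMatch a b p) = pbv p"

fun set_bv :: "prefix \<Rightarrow> var \<Rightarrow> prefix" where
  "set_bv (POut a k) y = POut a k"
| "set_bv (PIn a x) y = PIn a y"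
| "set_bv (PMatch a b p) y = PMatch a b (set_bv p y)"

fun fn :: "proc \<Rightarrow> name set" where
  "fn PNil = {}"
| "fn (Pref p P) = pfn p \<union> (case pbv p of None \<Rightarrow> fn P | Some x \<Rightarrow> fn P - {NV x})"
| "fn (Par P Q) = fn P \<union> fn Q"
| "fn (Res k P) = fn P - {NC k}"
| "fn (Bang P) = fn P"

fun bn :: "proc \<Rightarrow> name set" where
  "bn PNil = {}"
| "bn (Pref p P) = (case pbv p of None \<Rightarrow> {} | Some x \<Rightarrow> {NV x}) \<union> bn P"
| "bn (Par P Q) = bn P \<union> bn Q"
| "bn (Res k P) = {NC k} \<union> bn P"
| "bn (Bang P) = bn P"

definition names :: "proc \<Rightarrow> name set" where
  "names P = fn P \<union> bn P"

fun pfo :: "prefix \<Rightarrow> chan set" where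
  "pfo (POut a k) = {k}"
| "pfo (PIn a x) = {}"
| "pfo (PMatch a b p) = pfo p"

fun fo :: "proc \<Rightarrow> chan set" where
  "fo PNil = {}"
| "fo (Pref p P) = pfo p \<union> fo P"
| "fo (Par P Q) = fo P \<union> fo Q"
| "fo (Res k P) = fo P - {k}"
| "fo (Bang P) = fo P"

fun afn :: "act \<Rightarrow> name set" where
  "afn (AOut k l) = {NC k, NC l}"
| "afn (AIn k l) = {NC k, NC l}"
| "afn (ABOut k l) = {NC k}"
| "afn Tau = {}"

fun abn :: "act \<Rightarrow> name set" where
  "abn (ABOut k l) = {NC l}"
| "abn _ = {}"

definition anames :: "act \<Rightarrow> name set" where
  "anames a = afn a \<union> abn a"

section \<open>Substitution of a name b for free occurrences of a name a (naive, no renaming)\<close>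

definition sn :: "name \<Rightarrow> name \<Rightarrow> name \<Rightarrow> name" where
  "sn a b c = (if c = a then b else c)"

definition osub :: "name \<Rightarrow> name \<Rightarrow> chan \<Rightarrow> chan" where
  "osub a b k = (case (a, b) of (NC k1, NC k2) \<Rightarrow> (if k = k1 then k2 else k) | _ \<Rightarrow> k)"

fun psub :: "name \<Rightarrow> name \<Rightarrow> prefix \<Rightarrow> prefix" where
  "psub a b (POut c k) = POut (sn a b c) (osub a b k)"
| "psub a b (PIn c x) = PIn (sn a b c) x"
| "psub a b (PMatch c d p) = PMatch (sn a b c) (sn a b d) (psub a b p)"

fun sub :: "name \<Rightarrow> name \<Rightarrow> proc \<Rightarrow> proc" where
  "sub a b PNil = PNil"
| "sub a b (Pref p P) = Pref (psub a b p) (if pbv p = None \<or> a \<noteq> NV (the (pbv p)) then sub a b P else P)"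
| "sub a b (Par P Q) = Par (sub a b P) (sub a b Q)"
| "sub a b (Res k P) = Res k (if a = NC k then P else sub a b P)"
| "sub a b (Bang P) = Bang (sub a b P)"

inductive alpha :: "proc \<Rightarrow> proc \<Rightarrow> bool" where
  a_refl: "alpha P P"
| a_sym: "alpha P Q \<Longrightarrow> alpha Q P"
| a_trans: "alpha P Q \<Longrightarrow> alpha Q R \<Longrightarrow> alpha P R"
| a_pref: "alpha P Q \<Longrightarrow> alpha (Pref p P) (Pref p Q)"
| a_par: "alpha P1 Q1 \<Longrightarrow> alpha P2 Q2 \<Longrightarrow> alpha (Par P1 P2) (Par Q1 Q2)"
| a_res: "alpha P Q \<Longrightarrow> alpha (Res k P) (Res k Q)"
| a_bang: "alpha P Q \<Longrightarrow> alpha (Bang P) (Bang Q)"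
| a_res_ren: "NC k' \<notin> names P \<Longrightarrow> alpha (Res k P) (Res k' (sub (NC k) (NC k') P))"
| a_in_ren: "pbv p = Some x \<Longrightarrow> NV y \<notin> names P \<Longrightarrow>
             alpha (Pref p P) (Pref (set_bv p y) (sub (NV x) (NV y) P))"

inductive lts :: "proc \<Rightarrow> act \<Rightarrow> proc \<Rightarrow> bool" where
  t_out: "lts (Pref (POut (NC k) l) P) (AOut k l) P"
| t_in: "NC l \<notin> bn P \<Longrightarrow> lts (Pref (PIn (NC k) x) P) (AIn k l) (sub (NV x) (NC l) P)"
| t_match: "lts (Pref p P) a P' \<Longrightarrow> lts (Pref (PMatch b b p) P) a P'"
| t_res: "lts P a P' \<Longrightarrow> NC k \<notin> anames a \<Longrightarrow> lts (Res k P) a (Res k P')"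
| t_open: "lts P (AOut k l) Q \<Longrightarrow> k \<noteq> l \<Longrightarrow> lts (Res l P) (ABOut k l) Q"
| t_parl: "lts P a Q \<Longrightarrow> abn a \<inter> fn R = {} \<Longrightarrow> lts (Par P R) a (Par Q R)"
| t_parr: "lts P a Q \<Longrightarrow> abn a \<inter> fn R = {} \<Longrightarrow> lts (Par R P) a (Par R Q)"
| t_comml: "lts P (AOut k l) P' \<Longrightarrow> lts Q (AIn k l) Q' \<Longrightarrow> lts (Par P Q) Tau (Par P' Q')"
| t_commr: "lts P (AIn k l) P' \<Longrightarrow> lts Q (AOut k l) Q' \<Longrightarrow> lts (Par P Q) Tau (Par P' Q')"
| t_closel: "lts P (ABOut k l) P' \<Longrightarrow> lts Q (AIn k l) Q' \<Longrightarrow> NC l \<notin> fn Q \<Longrightarrow>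
             lts (Par P Q) Tau (Res l (Par P' Q'))"
| t_closer: "lts P (AIn k l) P' \<Longrightarrow> lts Q (ABOut k l) Q' \<Longrightarrow> NC l \<notin> fn P \<Longrightarrow>
             lts (Par P Q) Tau (Res l (Par P' Q'))"
| t_rep_act: "lts P a P' \<Longrightarrow> lts (Bang P) a (Par P' (Bang P))"
| t_rep_comm: "lts P (AOut k l) P' \<Longrightarrow> lts P (AIn k l) P'' \<Longrightarrow>
               lts (Bang P) Tau (Par (Par P' P'') (Bang P))"
| t_rep_close: "lts P (ABOut k l) P' \<Longrightarrow> lts P (AIn k l) P'' \<Longrightarrow> NC l \<notin> fn P \<Longrightarrow>
               lts (Bang P) Tau (Par (Res l (Par P' P'')) (Bang P))"
| t_alpha: "alpha P P' \<Longrightarrow> lts P' a Q' \<Longrightarrow> alpha Q' Q \<Longrightarrow> lts P a Q"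

end

theory Submission
  imports Defs
begin

text \<open>A free output k<l> requires l to be an output object of the process, and a transition can
  add to the output objects only the channel it extrudes. Since l occurs in the input k(l), a bound
  output chosen fresh later cannot extrude l, so l stays outside fo along the rest of the run and
  can never be output freely.\<close>

lemma pfo_psub_NV: "pfo (psub (NV x) b p) = pfo p"
  by (induction p) (auto simp: osub_def)

lemma fo_sub_NV: "fo (sub (NV x) b P) = fo P"
  by (induction P) (auto simp: pfo_psub_NV)

lemma pfo_psub_NC: "pfo (psub (NC k) (NC k') p) = (\<lambda>c. if c = k then k' else c) ` pfo p"
  by (induction p) (auto simp: osub_def)

lemma pfo_set_bv: "pfo (set_bv p y) = pfo p"
  by (induction p) auto

lemma fo_sub_NC:
  assumes "NC k' \<notin> names P"
  shows "fo (sub (NC k) (NC k') P) = (\<lambda>c. if c = k then k' else c) ` fo P"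
  using assms
proof (induction P)
  case (Pref p Q)
  then have "NC k' \<notin> names Q"
    by (auto simp: names_def split: option.splits)
  with Pref.IH show ?case by (auto simp: pfo_psub_NC image_Un)
next
  case (Res j Q)
  then have "NC k' \<notin> names Q" and "j \<noteq> k'"
    by (auto simp: names_def)
  with Res.IH show ?case by auto
qed (auto simp: names_def image_Un)

lemma pfo_subset_pfn: "c \<in> pfo p \<Longrightarrow> NC c \<in> pfn p"
  by (induction p) auto

lemma fo_subset_fn: "c \<in> fo P \<Longrightarrow> NC c \<in> fn P"
  by (induction P) (auto dest: pfo_subset_pfn split: option.splits)

lemma alpha_fo_eq: "alpha P Q \<Longrightarrow> fo P = fo Q"
proof (induction rule: alpha.induct)
  case (a_res_ren k' P k)
  then have "k' \<notin> fo P"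
    using fo_subset_fn by (auto simp: names_def)
  with fo_sub_NC[OF a_res_ren] show ?case by auto
qed (simp_all add: fo_sub_NV pfo_set_bv)

fun extruded :: "act \<Rightarrow> chan set" where
  "extruded (ABOut k l) = {l}"
| "extruded _ = {}"

lemma lts_fo_subset: "lts P a Q \<Longrightarrow> fo Q \<subseteq> fo P \<union> extruded a"
proof (induction rule: lts.induct)
  case (t_res P a P' k)
  then show ?case by (cases a) (auto simp: anames_def)
next
  case (t_alpha P P' a Q' Q)
  then show ?case by (simp add: alpha_fo_eq)
qed (auto simp: fo_sub_NV)

lemma lts_out_object_in_fo: "lts P (AOut k l) Q \<Longrightarrow> l \<in> fo P"
proof (induction P "AOut k l" Q arbitrary: k rule: lts.induct)
  case (t_res P P' k')
  then show ?case by (auto simp: anames_def)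
qed (auto dest: alpha_fo_eq)

lemma run_not_in_fo:
  assumes "i \<le> j"
    and "\<forall>h\<in>{i..<j}. lts (P h) (A h) (P (Suc h))"
    and "\<forall>h\<in>{i..<j}. l \<notin> extruded (A h)"
    and "l \<notin> fo (P i)"
  shows "l \<notin> fo (P j)"
  using assms
proof (induction j rule: dec_induct)
  case (step j)
  then have "fo (P (Suc j)) \<subseteq> fo (P j) \<union> extruded (A j)"
    by (simp add: lts_fo_subset)
  with step show ?case by auto
qed simp

theorem theorem1:
  fixes P :: "nat \<Rightarrow> proc" and A :: "nat \<Rightarrow> act" and m i :: nat and k l :: chan
  assumes steps: "\<forall>j\<in>{1..m}. lts (P j) (A j) (P (Suc j))"
    and fresh: "\<forall>j\<in>{1..m}. \<forall>k' l'. A j = ABOut k' l' \<longrightarrow>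
                  (\<forall>h\<in>{1..j}. NC l' \<notin> fn (P h)) \<and> (\<forall>h\<in>{1..<j}. NC l' \<notin> anames (A h))"
    and i: "1 \<le> i" "i \<le> m - 1"
    and inp: "A i = AIn k l"
    and nfo: "l \<notin> fo (P i)"
  shows "\<forall>j\<in>{i+1..m}. \<forall>k'. A j \<noteq> AOut k' l"
proof (intro ballI allI notI)
  fix j k' assume j: "j \<in> {i+1..m}" and out: "A j = AOut k' l"
  have not_extruded: "l \<notin> extruded (A h)" if "h \<in> {i..<j}" for h
  proof (cases "A h")
    case (ABOut k'' l')
    with inp have "h \<noteq> i" by auto
    with that i j have "h \<in> {1..m}" and "i \<in> {1..<h}" by auto
    with fresh ABOut have "NC l' \<notin> anames (A i)" by blast
    with ABOut inp show ?thesis by (auto simp: anames_def)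
  qed auto
  have "l \<notin> fo (P j)"
    using run_not_in_fo[of i j P A l] steps not_extruded nfo i j by auto
  moreover have "j \<in> {1..m}"
    using i j by auto
  with steps out have "lts (P j) (AOut k' l) (P (Suc j))"
    by metis
  then have "l \<in> fo (P j)"
    by (rule lts_out_object_in_fo)
  ultimately show False by contradiction
qed

end
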